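(* Let $r\in\wedge^2\mathfrak g$ be a non-degenerate solution of the classical Yang–Baxter equation on a finite-dimensional real Lie algebra $(\mathfrak g,[\cdot,\cdot])$ (i.e. $r^\sharp$ is invertible), and let $n:\mathfrak g\to\mathfrak g$ be a linear map with $n\circ r^\sharp=r^\sharp\circ{}^tn$ and $C(r,n)=0$. Then $nr$ (defined by $(nr)^\sharp=n\circ r^\sharp$) is a solution of the classical Yang–Baxter equation if and only if $n$ is a Nijenhuis operator.
   Context: For $r\in\wedge^2\mathfrak g$, $r^\sharp:\mathfrak g^*\to\mathfrak g$ is defined by $\langle\eta_2,r^\sharp\eta_1\rangle=r(\eta_1,\eta_2)$. $r$ solves the classical Yang–Baxter equation iff $\langle\eta_1,[r^\sharp\eta_2,r^\sharp\eta_3]\rangle-\langle\eta_2,[r^\sharp\eta_1,r^\sharp\eta_3]\rangle+\langle\eta_3,[r^\sharp\eta_1,r^\sharp\eta_2]\rangle=0$ for all $\eta_i$. $\langle\mathrm{ad}^*_\xi\eta,\zeta\rangle=-\langle\eta,[\xi,\zeta]\rangle$; ${}^tn$ is the transpose of $n$; $C(r,n)(\eta_1,\eta_2)=[{}^tn,\mathrm{ad}^*_{r^\sharp\eta_1}]\eta_2-[{}^tn,\mathrm{ad}^*_{r^\sharp\eta_2}]\eta_1$. $n$ is Nijenhuis if $n([n\xi_1,\xi_2]+[\xi_1,n\xi_2]-n[\xi_1,\xi_2])=[n\xi_1,n\xi_2]$ for all $\xi_i$. *)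

theory Defs
  imports "HOL-Analysis.Analysis"
begin

definition lie_algebra :: "('a::euclidean_space \<Rightarrow> 'a \<Rightarrow> 'a) \<Rightarrow> bool" where
  "lie_algebra br \<longleftrightarrow> bilinear br \<and> (\<forall>x. br x x = 0) \<and>
     (\<forall>x y z. br x (br y z) + br y (br z x) + br z (br x y) = 0)"

definition dual :: "('a::euclidean_space \<Rightarrow> real) set" where
  "dual = {\<eta>. linear \<eta>}"

text \<open>Elements of the exterior square of g, viewed as skew-symmetric bilinear forms on g*.\<close>
definition wedge2 :: "(('a::euclidean_space \<Rightarrow> real) \<Rightarrow> ('a \<Rightarrow> real) \<Rightarrow> real) \<Rightarrow> bool" where
  "wedge2 r \<longleftrightarrow>
     (\<forall>\<eta>1\<in>dual. \<forall>\<eta>2\<in>dual. \<forall>\<eta>3\<in>dual. \<forall>c::real.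
        r (\<lambda>x. \<eta>1 x + \<eta>2 x) \<eta>3 = r \<eta>1 \<eta>3 + r \<eta>2 \<eta>3 \<and>
        r (\<lambda>x. c * \<eta>1 x) \<eta>2 = c * r \<eta>1 \<eta>2 \<and>
        r \<eta>1 \<eta>2 = - r \<eta>2 \<eta>1)"

definition sharp :: "(('a::euclidean_space \<Rightarrow> real) \<Rightarrow> ('a \<Rightarrow> real) \<Rightarrow> real) \<Rightarrow> ('a \<Rightarrow> real) \<Rightarrow> 'a" where
  "sharp r \<eta>1 = (THE \<xi>. \<forall>\<eta>2\<in>dual. \<eta>2 \<xi> = r \<eta>1 \<eta>2)"

definition CYBE :: "('a::euclidean_space \<Rightarrow> 'a \<Rightarrow> 'a) \<Rightarrow> (('a \<Rightarrow> real) \<Rightarrow> ('a \<Rightarrow> real) \<Rightarrow> real) \<Rightarrow> bool" where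
  "CYBE br r \<longleftrightarrow> (\<forall>\<eta>1\<in>dual. \<forall>\<eta>2\<in>dual. \<forall>\<eta>3\<in>dual.
      \<eta>1 (br (sharp r \<eta>2) (sharp r \<eta>3)) - \<eta>2 (br (sharp r \<eta>1) (sharp r \<eta>3))
      + \<eta>3 (br (sharp r \<eta>1) (sharp r \<eta>2)) = 0)"

definition dual_transpose :: "('a \<Rightarrow> 'a) \<Rightarrow> ('a \<Rightarrow> real) \<Rightarrow> ('a \<Rightarrow> real)" where
  "dual_transpose n \<eta> = (\<lambda>\<xi>. \<eta> (n \<xi>))"

definition coad :: "('a \<Rightarrow> 'a \<Rightarrow> 'a) \<Rightarrow> 'a \<Rightarrow> ('a \<Rightarrow> real) \<Rightarrow> ('a \<Rightarrow> real)" where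
  "coad br \<xi> \<eta> = (\<lambda>\<zeta>. - \<eta> (br \<xi> \<zeta>))"

definition comm_tn_coad :: "('a \<Rightarrow> 'a \<Rightarrow> 'a) \<Rightarrow> ('a \<Rightarrow> 'a) \<Rightarrow> 'a \<Rightarrow> ('a \<Rightarrow> real) \<Rightarrow> ('a \<Rightarrow> real)" where
  "comm_tn_coad br n \<xi> \<eta> = (\<lambda>\<zeta>. dual_transpose n (coad br \<xi> \<eta>) \<zeta> - coad br \<xi> (dual_transpose n \<eta>) \<zeta>)"

definition concomitant :: "('a::euclidean_space \<Rightarrow> 'a \<Rightarrow> 'a) \<Rightarrow> (('a \<Rightarrow> real) \<Rightarrow> ('a \<Rightarrow> real) \<Rightarrow> real)
    \<Rightarrow> ('a \<Rightarrow> 'a) \<Rightarrow> ('a \<Rightarrow> real) \<Rightarrow> ('a \<Rightarrow> real) \<Rightarrow> ('a \<Rightarrow> real)" where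
  "concomitant br r n \<eta>1 \<eta>2 =
     (\<lambda>\<zeta>. comm_tn_coad br n (sharp r \<eta>1) \<eta>2 \<zeta> - comm_tn_coad br n (sharp r \<eta>2) \<eta>1 \<zeta>)"

text \<open>The bivector nr, determined by (nr)-sharp = n o r-sharp,
  i.e. (nr)(eta1, eta2) = eta2 (n (r-sharp eta1)).\<close>
definition nr :: "('a::euclidean_space \<Rightarrow> 'a) \<Rightarrow> (('a \<Rightarrow> real) \<Rightarrow> ('a \<Rightarrow> real) \<Rightarrow> real)
    \<Rightarrow> ('a \<Rightarrow> real) \<Rightarrow> ('a \<Rightarrow> real) \<Rightarrow> real" where
  "nr n r \<eta>1 \<eta>2 = \<eta>2 (n (sharp r \<eta>1))"

definition nijenhuis :: "('a \<Rightarrow> 'a \<Rightarrow> 'a::real_vector) \<Rightarrow> ('a \<Rightarrow> 'a) \<Rightarrow> bool" where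
  "nijenhuis br n \<longleftrightarrow> (\<forall>x y. n (br (n x) y + br x (n y) - n (br x y)) = br (n x) (n y))"

end

theory Submission
  imports Defs
begin

text \<open>Since \<open>r\<close> is non-degenerate, \<open>\<omega> := (r\<^sup>\<sharp>)\<^sup>-\<^sup>1\<close> is a non-degenerate skew form on \<open>g\<close>,
  and the CYBE for \<open>r\<close> says exactly that \<open>\<omega>\<close> is a 2-cocycle. The hypothesis
  \<open>n r\<^sup>\<sharp> = r\<^sup>\<sharp> \<^sup>tn\<close> makes \<open>n\<close> symmetric for \<open>\<omega>\<close>, and \<open>C(r,n) = 0\<close> becomes a linear identity
  in \<open>\<omega>\<close>. Evaluating the CYBE for \<open>nr\<close> on \<open>\<omega>(a), \<omega>(b), \<omega>(c)\<close> and combining three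
  instances of the cocycle identity with one of \<open>C(r,n) = 0\<close> yields \<open>\<omega>(c, T\<^sub>n(a,b))\<close>,
  where \<open>T\<^sub>n\<close> is the Nijenhuis torsion of \<open>n\<close>. By non-degeneracy of \<open>\<omega>\<close> this vanishes
  for all \<open>a, b, c\<close> iff \<open>T\<^sub>n = 0\<close>.\<close>

lemma dual_eq_inner_adjoint:
  assumes "\<mu> \<in> dual"
  shows "\<mu> x = x \<bullet> adjoint \<mu> 1"
  using adjoint_works[of \<mu> x 1] assms by (simp add: dual_def)

lemma inner_in_dual: "(\<lambda>x. x \<bullet> v) \<in> dual"
  by (simp add: dual_def bounded_linear.linear bounded_linear_inner_left)

lemma dual_separates:
  fixes x y :: "'a::euclidean_space"
  assumes "\<forall>\<mu>\<in>dual. \<mu> x = \<mu> y"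
  shows "x = y"
proof -
  have "(\<lambda>z. z \<bullet> (x - y)) x = (\<lambda>z. z \<bullet> (x - y)) y"
    using assms inner_in_dual[of "x - y"] by (rule bspec)
  then have "(x - y) \<bullet> (x - y) = 0"
    by (simp add: inner_diff_left)
  then show ?thesis
    by simp
qed

lemma wedge2_add_left:
  "wedge2 r \<Longrightarrow> \<eta>1 \<in> dual \<Longrightarrow> \<eta>2 \<in> dual \<Longrightarrow> \<eta>3 \<in> dual
    \<Longrightarrow> r (\<lambda>x. \<eta>1 x + \<eta>2 x) \<eta>3 = r \<eta>1 \<eta>3 + r \<eta>2 \<eta>3"
  unfolding wedge2_def by blast

lemma wedge2_scale_left:
  "wedge2 r \<Longrightarrow> \<eta>1 \<in> dual \<Longrightarrow> \<eta>2 \<in> dual \<Longrightarrow> r (\<lambda>x. c * \<eta>1 x) \<eta>2 = c * r \<eta>1 \<eta>2"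
  unfolding wedge2_def by blast

lemma wedge2_skew: "wedge2 r \<Longrightarrow> \<eta>1 \<in> dual \<Longrightarrow> \<eta>2 \<in> dual \<Longrightarrow> r \<eta>1 \<eta>2 = - r \<eta>2 \<eta>1"
  unfolding wedge2_def by blast

lemma wedge2_linear_inner:
  assumes "wedge2 r" "\<eta> \<in> dual"
  shows "linear (\<lambda>v. r (\<lambda>x. x \<bullet> v) \<eta>)"
proof (rule linearI)
  fix u v :: 'a and c :: real
  show "r (\<lambda>x. x \<bullet> (u + v)) \<eta> = r (\<lambda>x. x \<bullet> u) \<eta> + r (\<lambda>x. x \<bullet> v) \<eta>"
    using wedge2_add_left[OF assms(1) inner_in_dual inner_in_dual assms(2)]
    by (simp add: inner_add_right)
  show "r (\<lambda>x. x \<bullet> (c *\<^sub>R v)) \<eta> = c *\<^sub>R r (\<lambda>x. x \<bullet> v) \<eta>"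
    using wedge2_scale_left[OF assms(1) inner_in_dual assms(2)] by simp
qed

lemma sharp_eq:
  assumes "wedge2 r" "\<eta> \<in> dual" "\<mu> \<in> dual"
  shows "\<mu> (sharp r \<eta>) = r \<eta> \<mu>"
proof -
  define f where "f v = - r (\<lambda>x. x \<bullet> v) \<eta>" for v
  have "linear f"
    unfolding f_def using wedge2_linear_inner[OF assms(1,2)] by (rule linear_compose_neg)
  have f_eq: "f v = r \<eta> (\<lambda>x. x \<bullet> v)" for v
    using wedge2_skew[OF assms(1,2) inner_in_dual] by (simp add: f_def)
  \<comment> \<open>\<open>\<xi>\<close> is the Riesz representative of \<open>f\<close>, i.e. of \<open>v \<mapsto> r \<eta> \<langle>v, -\<rangle>\<close>\<close>
  define \<xi> where "\<xi> = adjoint f 1"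
  have \<xi>: "\<forall>\<mu>\<in>dual. \<mu> \<xi> = r \<eta> \<mu>"
  proof
    fix \<mu> :: "'a \<Rightarrow> real" assume "\<mu> \<in> dual"
    then have "\<mu> = (\<lambda>x. x \<bullet> adjoint \<mu> 1)"
      using dual_eq_inner_adjoint by blast
    moreover have "\<xi> \<bullet> adjoint \<mu> 1 = f (adjoint \<mu> 1)"
      using adjoint_works[OF \<open>linear f\<close>, of "adjoint \<mu> 1" 1] by (simp add: \<xi>_def inner_commute)
    ultimately show "\<mu> \<xi> = r \<eta> \<mu>"
      using f_eq by metis
  qed
  have "sharp r \<eta> = \<xi>"
    unfolding sharp_def
  proof (rule the_equality)
    fix z assume "\<forall>\<mu>\<in>dual. \<mu> z = r \<eta> \<mu>"
    with \<xi> show "z = \<xi>"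
      by (intro dual_separates) auto
  qed (fact \<xi>)
  with \<xi> assms(3) show ?thesis
    by simp
qed

lemma sharp_nr:
  assumes "\<eta> \<in> dual"
  shows "sharp (nr n r) \<eta> = n (sharp r \<eta>)"
  unfolding sharp_def nr_def
  by (rule the_equality) (auto intro: dual_separates)

lemma lie_algebra_antisym:
  assumes "lie_algebra br"
  shows "br y z = - br z y"
proof -
  have "bilinear br"
    using assms by (simp add: lie_algebra_def)
  then have "br (y + z) (y + z) = br y y + br y z + br z y + br z z"
    by (simp add: bilinear_ladd bilinear_radd)
  then show ?thesis
    using assms by (simp add: lie_algebra_def eq_neg_iff_add_eq_0)
qed

definition nijenhuis_torsion :: "('a \<Rightarrow> 'a \<Rightarrow> 'a::real_vector) \<Rightarrow> ('a \<Rightarrow> 'a) \<Rightarrow> 'a \<Rightarrow> 'a \<Rightarrow> 'a" where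
  "nijenhuis_torsion br n x y = br (n x) (n y) - n (br (n x) y + br x (n y) - n (br x y))"

lemma nijenhuis_iff_torsion_zero: "nijenhuis br n \<longleftrightarrow> (\<forall>x y. nijenhuis_torsion br n x y = 0)"
  unfolding nijenhuis_def nijenhuis_torsion_def by (metis eq_iff_diff_eq_0)

lemma cocycle_concomitant_identity:
  fixes w :: "'a \<Rightarrow> 'a \<Rightarrow> real"
  assumes coc: "\<And>x y z. w x (br y z) + w y (br z x) + w z (br x y) = 0"
    and con: "\<And>x1 x2 z. w x1 (br x2 (n z)) - w x2 (br x1 (n z)) + w (n x2) (br x1 z) - w (n x1) (br x2 z) = 0"
    and skw: "\<And>x y z. w x (br y z) = - w x (br z y)"
  shows "w a (br (n b) (n c)) - w b (br (n a) (n c)) + w (n c) (br (n a) b) + w (n c) (br a (n b))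
         - w (n (n c)) (br a b) = 0"
  using coc[of a b "n (n c)"] coc[of a "n b" "n c"] coc[of "n a" b "n c"] con[of a b "n c"]
    skw[of "n (n c)" b a] skw[of b "n (n c)" a] skw[of a b "n (n c)"]
    skw[of "n c" b "n a"] skw[of "n c" "n b" a] skw[of "n b" "n c" a] skw[of "n a" b "n c"]
    skw[of b "n c" "n a"] skw[of a "n c" "n b"]
    skw[of "n a" "n c" b] skw[of b "n a" "n c"] skw[of "n b" a "n c"] skw[of "n c" a "n b"]
  by linarith

locale nondegenerate_bivector =
  fixes r :: "('a::euclidean_space \<Rightarrow> real) \<Rightarrow> ('a \<Rightarrow> real) \<Rightarrow> real"
  assumes wedge2: "wedge2 r"
    and sharp_bij: "bij_betw (sharp r) dual UNIV"
begin

definition \<omega> :: "'a \<Rightarrow> 'a \<Rightarrow> real" where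
  "\<omega> x = inv_into dual (sharp r) x"

lemma \<omega>_in_dual: "\<omega> x \<in> dual"
  unfolding \<omega>_def using sharp_bij by (metis UNIV_I bij_betw_def inv_into_into)

lemma sharp_\<omega>: "sharp r (\<omega> x) = x"
  unfolding \<omega>_def using sharp_bij by (metis UNIV_I bij_betw_def f_inv_into_f)

lemma \<omega>_sharp: "\<eta> \<in> dual \<Longrightarrow> \<omega> (sharp r \<eta>) = \<eta>"
  unfolding \<omega>_def using sharp_bij by (simp add: bij_betw_def inv_into_f_f)

lemma linear_\<omega>: "linear (\<omega> x)"
  using \<omega>_in_dual by (simp add: dual_def)

lemma \<omega>_skew: "\<omega> x y = - \<omega> y x"
  using sharp_eq[OF wedge2 \<omega>_in_dual \<omega>_in_dual, of y x] sharp_eq[OF wedge2 \<omega>_in_dual \<omega>_in_dual, of x y]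
    wedge2_skew[OF wedge2 \<omega>_in_dual \<omega>_in_dual, of x y]
  by (simp add: sharp_\<omega>)

lemma \<omega>_nondegenerate: "(\<forall>x. \<omega> x v = 0) \<longleftrightarrow> v = 0"
proof
  assume "\<forall>x. \<omega> x v = 0"
  then have "\<forall>\<mu>\<in>dual. \<mu> v = \<mu> 0"
    by (metis \<omega>_sharp dual_def linear_0 mem_Collect_eq)
  then show "v = 0"
    by (rule dual_separates)
qed (simp add: linear_0[OF linear_\<omega>])

lemma CYBE_iff_\<omega>:
  assumes "\<forall>\<eta>\<in>dual. sharp s \<eta> = f (sharp r \<eta>)"
  shows "CYBE br s \<longleftrightarrow>
    (\<forall>a b c. \<omega> a (br (f b) (f c)) - \<omega> b (br (f a) (f c)) + \<omega> c (br (f a) (f b)) = 0)"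
proof
  assume cybe: "CYBE br s"
  show "\<forall>a b c. \<omega> a (br (f b) (f c)) - \<omega> b (br (f a) (f c)) + \<omega> c (br (f a) (f b)) = 0"
  proof (intro allI)
    fix a b c
    show "\<omega> a (br (f b) (f c)) - \<omega> b (br (f a) (f c)) + \<omega> c (br (f a) (f b)) = 0"
      using cybe[unfolded CYBE_def, rule_format, OF \<omega>_in_dual \<omega>_in_dual \<omega>_in_dual, of a b c]
        assms \<omega>_in_dual
      by (simp add: sharp_\<omega>)
  qed
next
  assume *: "\<forall>a b c. \<omega> a (br (f b) (f c)) - \<omega> b (br (f a) (f c)) + \<omega> c (br (f a) (f b)) = 0"
  show "CYBE br s"
    unfolding CYBE_def
  proof (intro ballI)
    fix \<eta>1 \<eta>2 \<eta>3 :: "'a \<Rightarrow> real"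
    assume "\<eta>1 \<in> dual" "\<eta>2 \<in> dual" "\<eta>3 \<in> dual"
    with *[rule_format, of "sharp r \<eta>1" "sharp r \<eta>2" "sharp r \<eta>3"] assms
    show "\<eta>1 (br (sharp s \<eta>2) (sharp s \<eta>3)) - \<eta>2 (br (sharp s \<eta>1) (sharp s \<eta>3))
        + \<eta>3 (br (sharp s \<eta>1) (sharp s \<eta>2)) = 0"
      by (simp add: \<omega>_sharp)
  qed
qed

lemma \<omega>_cocycle:
  assumes "lie_algebra br" "CYBE br r"
  shows "\<omega> x (br y z) + \<omega> y (br z x) + \<omega> z (br x y) = 0"
proof -
  have "\<omega> x (br y z) - \<omega> y (br x z) + \<omega> z (br x y) = 0"
    using CYBE_iff_\<omega>[of r id br] assms(2) by simp
  moreover have "\<omega> y (br z x) = - \<omega> y (br x z)"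
    using lie_algebra_antisym[OF assms(1)] linear_neg[OF linear_\<omega>] by metis
  ultimately show ?thesis
    by linarith
qed

lemma \<omega>_symmetric_operator:
  assumes "linear n" "\<forall>\<eta>\<in>dual. n (sharp r \<eta>) = sharp r (dual_transpose n \<eta>)"
  shows "\<omega> (n x) y = \<omega> x (n y)"
proof -
  have "dual_transpose n (\<omega> x) \<in> dual"
    using \<omega>_in_dual assms(1) linear_compose[of n "\<omega> x"]
    by (simp add: dual_def dual_transpose_def o_def)
  moreover have "n x = sharp r (dual_transpose n (\<omega> x))"
    using assms(2) \<omega>_in_dual sharp_\<omega> by metis
  ultimately show ?thesis
    by (simp add: \<omega>_sharp dual_transpose_def)
qed

lemma \<omega>_concomitant:
  assumes "\<forall>\<eta>1\<in>dual. \<forall>\<eta>2\<in>dual. concomitant br r n \<eta>1 \<eta>2 = (\<lambda>\<zeta>. 0)"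
  shows "\<omega> x2 (n (br x1 z)) - \<omega> x2 (br x1 (n z)) + \<omega> x1 (br x2 (n z)) - \<omega> x1 (n (br x2 z)) = 0"
proof -
  have "concomitant br r n (\<omega> x1) (\<omega> x2) z = 0"
    using assms \<omega>_in_dual by metis
  then show ?thesis
    by (simp add: concomitant_def comm_tn_coad_def dual_transpose_def coad_def sharp_\<omega>)
qed

lemma \<omega>_nijenhuis_torsion:
  assumes lie: "lie_algebra br" and "CYBE br r" and "linear n"
    and "\<forall>\<eta>\<in>dual. n (sharp r \<eta>) = sharp r (dual_transpose n \<eta>)"
    and "\<forall>\<eta>1\<in>dual. \<forall>\<eta>2\<in>dual. concomitant br r n \<eta>1 \<eta>2 = (\<lambda>\<zeta>. 0)"
  shows "\<omega> c (nijenhuis_torsion br n a b)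
    = \<omega> a (br (n b) (n c)) - \<omega> b (br (n a) (n c)) + \<omega> c (br (n a) (n b))"
proof -
  note sym = \<omega>_symmetric_operator[OF assms(3,4)]
  have skw: "\<omega> x (br y z) = - \<omega> x (br z y)" for x y z
    using lie_algebra_antisym[OF lie] linear_neg[OF linear_\<omega>] by metis
  have con: "\<omega> x1 (br x2 (n z)) - \<omega> x2 (br x1 (n z)) + \<omega> (n x2) (br x1 z) - \<omega> (n x1) (br x2 z) = 0"
    for x1 x2 z
    using \<omega>_concomitant[OF assms(5), of x2 x1 z] by (simp add: sym)
  have "\<omega> c (nijenhuis_torsion br n a b)
      = \<omega> c (br (n a) (n b)) - (\<omega> (n c) (br (n a) b) + \<omega> (n c) (br a (n b)) - \<omega> (n (n c)) (br a b))"
    using linear_\<omega> assms(3)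
    by (simp add: nijenhuis_torsion_def sym linear_add linear_diff)
  with cocycle_concomitant_identity[where w = \<omega> and br = br and n = n,
      OF \<omega>_cocycle[OF lie assms(2)] con skw, of a b c]
  show ?thesis
    by linarith
qed

end

theorem mainTheorem8:
  fixes br :: "'a::euclidean_space \<Rightarrow> 'a \<Rightarrow> 'a"
    and r :: "('a \<Rightarrow> real) \<Rightarrow> ('a \<Rightarrow> real) \<Rightarrow> real"
    and n :: "'a \<Rightarrow> 'a"
  assumes "lie_algebra br"
    and "wedge2 r"
    and "CYBE br r"
    and "bij_betw (sharp r) dual UNIV"
    and "linear n"
    and "\<forall>\<eta>\<in>dual. n (sharp r \<eta>) = sharp r (dual_transpose n \<eta>)"
    and "\<forall>\<eta>1\<in>dual. \<forall>\<eta>2\<in>dual. concomitant br r n \<eta>1 \<eta>2 = (\<lambda>\<zeta>. 0)"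
  shows "CYBE br (nr n r) \<longleftrightarrow> nijenhuis br n"
proof -
  interpret nondegenerate_bivector r
    using assms(2,4) by unfold_locales
  have "CYBE br (nr n r) \<longleftrightarrow>
      (\<forall>a b c. \<omega> a (br (n b) (n c)) - \<omega> b (br (n a) (n c)) + \<omega> c (br (n a) (n b)) = 0)"
    using CYBE_iff_\<omega> sharp_nr by blast
  also have "\<dots> \<longleftrightarrow> (\<forall>a b c. \<omega> c (nijenhuis_torsion br n a b) = 0)"
    by (simp add: \<omega>_nijenhuis_torsion[OF assms(1,3,5-7)])
  also have "\<dots> \<longleftrightarrow> nijenhuis br n"
    using \<omega>_nondegenerate by (simp add: nijenhuis_iff_torsion_zero)
  finally show ?thesis .
qed

end
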